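(* Let $n$ be a positive integer and $\alpha,\beta$ non-negative real numbers with $\beta\neq 0$. Let $Q\in\mathcal{H}[1,n]$ satisfy $$Q(z)\prec 1+z+\frac{nz}{\beta+\alpha(1+z)}.$$ If $p\in\mathcal{H}[1,n]$ satisfies the differential equation $$p(z)Q(z)+\frac{zp'(z)}{\beta p(z)+\alpha}=1\qquad(z\in\mathbb{D}),$$ then $p(z)\prec \dfrac{1}{1+z}$.
   Context: $\mathbb{D}$ is the open unit disk. $\mathcal{H}[1,n]$ is the class of functions analytic in $\mathbb{D}$ of the form $1+a_nz^n+a_{n+1}z^{n+1}+\cdots$. $f\prec F$ means $f=F\circ\omega$ for some analytic $\omega:\mathbb{D}\to\mathbb{D}$ with $\omega(0)=0$. *)

theory Defs
  imports "HOL-Complex_Analysis.Complex_Analysis"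
begin

text \<open>The class H[1,n]: analytic in the unit disk, of the form 1 + a_n z^n + ...,
  i.e. f(0) = 1 and the derivatives of orders 1,...,n-1 vanish at 0.\<close>
definition H1 :: "nat \<Rightarrow> (complex \<Rightarrow> complex) set" where
  "H1 n = {f. f holomorphic_on ball 0 1 \<and> f 0 = 1 \<and>
              (\<forall>k. 1 \<le> k \<and> k < n \<longrightarrow> (deriv ^^ k) f 0 = 0)}"

definition subordinate :: "(complex \<Rightarrow> complex) \<Rightarrow> (complex \<Rightarrow> complex) \<Rightarrow> bool"
  (infix "\<prec>" 50) where
  "f \<prec> F \<longleftrightarrow> (\<exists>\<omega>. \<omega> holomorphic_on ball 0 1 \<and> \<omega> ` ball 0 1 \<subseteq> ball 0 1 \<and>
        \<omega> 0 = 0 \<and> (\<forall>z\<in>ball 0 1. f z = F (\<omega> z)))"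

end

theory Submission
  imports Defs
begin

(* Put w = 1/p - 1. Since z \<mapsto> 1/z - 1 maps the half-plane Re z > 1/2 onto the unit disk,
   p \<prec> 1/(1+z) amounts to Re p > 1/2 on the disk, and p \<in> H[1,n] makes w vanish to order n
   at 0. If Re p reached 1/2, take such a point z0 of least modulus: then |w| attains its
   maximum 1 over |z| \<le> |z0| at z0, and Jack's lemma gives z0 w'(z0) = m w(z0) with m \<ge> n.
   Substituting into the differential equation yields Q(z0) - 1 = s + m s/(\<beta> + \<alpha>(1+s))
   with |s| = 1, a value that h(z) = z + n z/(\<beta> + \<alpha>(1+z)) does not take on the open disk;
   this contradicts Q - 1 \<prec> h. *)

lemma H1_eq_one_plus_power_mult:
  fixes p :: "complex \<Rightarrow> complex"
  assumes "p \<in> H1 n" "n \<ge> 1"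
  obtains k where "k holomorphic_on ball 0 1" "\<And>z. z \<in> ball 0 1 \<Longrightarrow> p z = 1 + z^n * k z"
proof -
  have hol: "p holomorphic_on ball 0 1" and p0: "p 0 = 1"
    and dz: "\<And>j. 1 \<le> j \<Longrightarrow> j < n \<Longrightarrow> (deriv ^^ j) p 0 = 0"
    using assms(1) by (auto simp: H1_def)
  define c where "c j = (deriv ^^ j) p 0 / fact j" for j
  define k where "k z = (if z = 0 then c n else (p z - 1) / z^n)" for z
  have taylor: "(\<lambda>j. c j * z^j) sums p z" if "z \<in> ball 0 1" for z
    using holomorphic_power_series[OF hol that] by (simp add: c_def)
  have initial: "(\<Sum>j<n. c j * z^j) = 1" for z
  proof -
    have "(\<Sum>j<n. c j * z^j) = c 0 + (\<Sum>j\<in>{1..<n}. c j * z^j)"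
      using assms(2) by (simp add: sum.atLeast_Suc_lessThan atLeast0LessThan[symmetric])
    also have "(\<Sum>j\<in>{1..<n}. c j * z^j) = 0"
      by (intro sum.neutral) (auto simp: c_def dz)
    finally show ?thesis by (simp add: c_def p0)
  qed
  have "(\<lambda>j. c (j + n) * (z - 0)^j) sums k z" if z: "z \<in> ball 0 1" for z
  proof (cases "z = 0")
    case True
    then have "(\<lambda>j. c (j + n) * (z - 0)^j) = (\<lambda>j. if j = 0 then c n else 0)"
      by (auto simp: fun_eq_iff)
    then show ?thesis using True sums_single[of 0 "\<lambda>_. c n"] by (simp add: k_def)
  next
    case False
    have "(\<lambda>j. c (j + n) * z^(j + n)) sums (p z - 1)"
      using sums_split_initial_segment[OF taylor[OF z], of n] by (simp add: initial)
    then have "(\<lambda>j. c (j + n) * z^(j + n) / z^n) sums ((p z - 1) / z^n)"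
      by (rule sums_divide)
    then show ?thesis using False by (simp add: k_def power_add)
  qed
  then have "k holomorphic_on ball 0 1" by (intro power_series_holomorphic) auto
  moreover have "p z = 1 + z^n * k z" for z
    using assms(2) p0 by (cases "z = 0") (auto simp: k_def)
  ultimately show ?thesis using that by blast
qed

lemma norm_one_plus_real_mult_le_1:
  fixes d :: complex
  assumes "Re d < 0" "0 < h" "h \<le> - Re d / (cmod d)^2"
  shows "cmod (1 + of_real h * d) \<le> 1"
proof -
  have "0 < (cmod d)^2" using assms(1) by auto
  then have "h * (cmod d)^2 \<le> - Re d" using assms(3) by (simp add: field_simps)
  then have "h * (h * (cmod d)^2) \<le> h * (- Re d)" using assms(2) by (intro mult_left_mono) auto
  moreover have "(cmod (1 + of_real h * d))^2 = 1 + 2 * h * Re d + h * (h * (cmod d)^2)"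
    unfolding cmod_power2 by (simp add: power2_eq_square algebra_simps)
  ultimately have "(cmod (1 + of_real h * d))^2 \<le> 1 + h * Re d" by simp
  also have "\<dots> \<le> 1" using mult_pos_neg[OF assms(2,1)] by simp
  finally show ?thesis by (simp add: power_le_one_iff abs_le_square_iff)
qed

(* Moving from z0 in the inward direction z0 d keeps us in the closed disk for small steps,
   so Re (g / g z0) cannot increase there. *)
lemma Re_logderiv_mult_inward_nonpos:
  fixes g :: "complex \<Rightarrow> complex"
  assumes hol: "g holomorphic_on U" and U: "open U" "cball 0 r \<subseteq> U" and z0: "cmod z0 = r"
    and max: "\<forall>z\<in>cball 0 r. cmod (g z) \<le> cmod (g z0)" and g0: "g z0 \<noteq> 0" and d: "Re d < 0"
  shows "Re (z0 * deriv g z0 / g z0 * d) \<le> 0"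
proof (rule ccontr)
  assume "\<not> ?thesis"
  then have pos: "0 < Re (z0 * deriv g z0 / g z0 * d)" by simp
  define \<psi> where "\<psi> x = Re (g (z0 + of_real x * (z0 * d)) / g z0)" for x :: real
  have "z0 \<in> U" using U z0 by auto
  then have outer: "(g has_field_derivative deriv g z0) (at (z0 + 0 * (z0 * d)))"
    using hol U holomorphic_derivI by fastforce
  have inner: "((\<lambda>x. z0 + x * (z0 * d)) has_field_derivative z0 * d) (at 0)"
    by (auto intro!: derivative_eq_intros)
  have "((\<lambda>x. g (z0 + x * (z0 * d)) / g z0) has_field_derivative
          deriv g z0 * (z0 * d) / g z0) (at (of_real 0))"
    using DERIV_cdivide[OF DERIV_chain2[OF outer inner], of "g z0"] by simp
  from has_field_derivative_Re[OF has_vector_derivative_real_field[OF this]]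
  have "(\<psi> has_field_derivative Re (z0 * deriv g z0 / g z0 * d)) (at 0)"
    unfolding \<psi>_def by (simp add: field_simps)
  from DERIV_pos_inc_right[OF this pos] obtain \<delta>
    where \<delta>: "0 < \<delta>" "\<And>h. 0 < h \<Longrightarrow> h < \<delta> \<Longrightarrow> \<psi> 0 < \<psi> (0 + h)" by blast
  define h where "h = min (\<delta>/2) (- Re d / (cmod d)^2)"
  have "0 < (cmod d)^2" using d by auto
  then have "0 < - Re d / (cmod d)^2" using divide_neg_pos[OF d] by simp
  then have h: "0 < h" "h \<le> - Re d / (cmod d)^2" using \<delta>(1) by (auto simp: h_def)
  have "z0 + of_real h * (z0 * d) = z0 * (1 + of_real h * d)" by (simp add: algebra_simps)
  moreover have "cmod (z0 * (1 + of_real h * d)) \<le> r"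
    using mult_left_le[OF norm_one_plus_real_mult_le_1[OF d h] norm_ge_zero[of z0]] z0
    by (simp add: norm_mult)
  ultimately have "cmod (g (z0 + of_real h * (z0 * d))) \<le> cmod (g z0)" using max by auto
  then have "cmod (g (z0 + of_real h * (z0 * d)) / g z0) \<le> 1"
    using g0 by (simp add: norm_divide divide_le_eq_1)
  then have "\<psi> h \<le> 1" unfolding \<psi>_def using complex_Re_le_cmod order_trans by blast
  moreover have "\<psi> 0 < \<psi> h" using \<delta> h by (simp add: h_def)
  moreover have "\<psi> 0 = 1" using g0 by (simp add: \<psi>_def)
  ultimately show False by simp
qed

lemma logderiv_at_boundary_max_nonneg_real:
  fixes g :: "complex \<Rightarrow> complex"
  assumes "g holomorphic_on U" "open U" "cball 0 r \<subseteq> U" "cmod z0 = r"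
    and "\<forall>z\<in>cball 0 r. cmod (g z) \<le> cmod (g z0)" "g z0 \<noteq> 0"
  obtains L where "0 \<le> L" "z0 * deriv g z0 / g z0 = of_real L"
proof -
  define c where "c = z0 * deriv g z0 / g z0"
  have inward: "Re (c * d) \<le> 0" if "Re d < 0" for d
    using Re_logderiv_mult_inward_nonpos[OF assms that] by (simp add: c_def)
  have "Im c = 0"
  proof (rule ccontr)
    assume "Im c \<noteq> 0"
    then show False using inward[of "Complex (-1) (- (Re c + 1) / Im c)"] by simp
  qed
  then have c_real: "c = of_real (Re c)" by (simp add: complex_eq_iff)
  show ?thesis
  proof (rule that)
    show "0 \<le> Re c" using inward[of "-1"] by simp
    show "z0 * deriv g z0 / g z0 = of_real (Re c)" using c_real unfolding c_def .
  qed
qed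

lemma boundary_max_cancel_power:
  fixes g :: "complex \<Rightarrow> complex"
  assumes holg: "g holomorphic_on cball 0 r" and r: "0 < r" and z0: "cmod z0 = r"
    and max: "\<forall>z\<in>cball 0 r. cmod (z^n * g z) \<le> cmod (z0^n * g z0)"
  shows "\<forall>z\<in>cball 0 r. cmod (g z) \<le> cmod (g z0)"
proof
  fix z :: complex
  assume "z \<in> cball 0 r"
  then show "cmod (g z) \<le> cmod (g z0)"
  proof (rule maximum_modulus_frontier[of g "cball 0 r", rotated 4])
    show "g holomorphic_on interior (cball 0 r)"
      using holomorphic_on_subset[OF holg] by (simp add: ball_subset_cball)
    show "continuous_on (closure (cball 0 r)) g"
      using holomorphic_on_imp_continuous_on[OF holg] by simp
    show "cmod (g y) \<le> cmod (g z0)" if "y \<in> frontier (cball 0 r)" for y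
    proof -
      have "r^n * cmod (g y) = cmod (y^n * g y)" using that r by (simp add: norm_mult norm_power)
      also have "\<dots> \<le> cmod (z0^n * g z0)" using max that r by auto
      also have "\<dots> = r^n * cmod (g z0)" using z0 by (simp add: norm_mult norm_power)
      finally show ?thesis using r by simp
    qed
  qed simp
qed

lemma jack_lemma:
  fixes w g :: "complex \<Rightarrow> complex"
  assumes holg: "g holomorphic_on U" and U: "open U" "cball 0 r \<subseteq> U" and r: "0 < r"
    and w: "\<And>z. z \<in> U \<Longrightarrow> w z = z^n * g z"
    and z0: "cmod z0 = r" and max: "\<forall>z\<in>cball 0 r. cmod (w z) \<le> cmod (w z0)"
    and w0: "w z0 \<noteq> 0"
  obtains m where "real n \<le> m" "z0 * deriv w z0 = of_real m * w z0"
proof -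
  have z0U: "z0 \<in> U" using U z0 by auto
  have g0: "g z0 \<noteq> 0" using w[OF z0U] w0 by (metis mult_zero_right)
  have "\<forall>z\<in>cball 0 r. cmod (g z) \<le> cmod (g z0)"
    using boundary_max_cancel_power[OF holomorphic_on_subset[OF holg U(2)] r z0] max w z0U U(2)
    by (metis subsetD)
  then obtain L where L: "0 \<le> L" "z0 * deriv g z0 / g z0 = of_real L"
    using logderiv_at_boundary_max_nonneg_real[OF holg U z0 _ g0] by blast
  have "((\<lambda>z. z^n * g z) has_field_derivative of_nat n * z0^(n-1) * g z0 + z0^n * deriv g z0) (at z0)"
    using holomorphic_derivI[OF holg U(1) z0U] by (auto intro!: derivative_eq_intros)
  then have "(w has_field_derivative of_nat n * z0^(n-1) * g z0 + z0^n * deriv g z0) (at z0)"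
    by (rule has_field_derivative_transform_within_open[OF _ U(1) z0U]) (simp add: w)
  then have "z0 * deriv w z0 = of_nat n * (z0 * z0^(n-1)) * g z0 + z0^n * (z0 * deriv g z0)"
    by (simp add: DERIV_imp_deriv algebra_simps)
  also have "of_nat n * (z0 * z0^(n-1)) = of_nat n * z0^n" by (cases n) simp_all
  also have "z0 * deriv g z0 = of_real L * g z0" using L(2) g0 by (simp add: field_simps)
  finally have "z0 * deriv w z0 = of_real (real n + L) * w z0"
    using w[OF z0U] by (simp add: algebra_simps)
  then show ?thesis using that[of "real n + L"] L(1) by simp
qed

lemma least_modulus_level_point:
  fixes f :: "complex \<Rightarrow> real"
  assumes cont: "continuous_on (ball 0 1) f" and f0: "a < f 0"
    and z1: "z1 \<in> ball 0 1" "f z1 \<le> a"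
  obtains z0 where "z0 \<in> ball 0 1" "z0 \<noteq> 0" "f z0 = a" "\<forall>z\<in>cball 0 (cmod z0). a \<le> f z"
proof -
  define K where "K = cball 0 (cmod z1) \<inter> f -` {..a}"
  have sub: "cball 0 (cmod z1) \<subseteq> ball 0 1" using z1 by auto
  have "closed K"
    unfolding K_def using continuous_on_subset[OF cont sub] by (intro continuous_closed_preimage) auto
  then have "compact K" by (simp add: K_def compact_eq_bounded_closed bounded_Int)
  moreover have "z1 \<in> K" using z1 by (simp add: K_def)
  ultimately obtain z0 where z0K: "z0 \<in> K" and least: "\<forall>y\<in>K. cmod z0 \<le> cmod y"
    using continuous_attains_inf[of K norm] by (auto intro: continuous_intros)
  have "z0 \<noteq> 0" using z0K f0 by (auto simp: K_def)
  have inner: "a < f z" if "z \<in> ball 0 (cmod z0)" for z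
  proof (rule ccontr)
    assume "\<not> a < f z"
    then have "z \<in> K" using that z0K by (auto simp: K_def)
    then show False using least that by fastforce
  qed
  have "cball 0 (cmod z0) \<subseteq> ball 0 1" using z0K sub by (auto simp: K_def)
  then have "continuous_on (closure (ball 0 (cmod z0))) f"
    using continuous_on_subset[OF cont] \<open>z0 \<noteq> 0\<close> by simp
  then have closed_ge: "\<forall>z\<in>cball 0 (cmod z0). a \<le> f z"
    using continuous_ge_on_closure[of "ball 0 (cmod z0)" f _ a] inner \<open>z0 \<noteq> 0\<close>
    by (simp add: less_imp_le)
  then have "f z0 = a" using z0K by (auto simp: K_def intro: antisym)
  moreover have "z0 \<in> ball 0 1" using z0K sub unfolding K_def by blast
  ultimately show ?thesis using that \<open>z0 \<noteq> 0\<close> closed_ge by blast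
qed

lemma norm_inverse_minus_one_sq:
  fixes P :: complex
  assumes "P \<noteq> 0"
  shows "(cmod (1 / P - 1))^2 = 1 + (1 - 2 * Re P) / (cmod P)^2"
proof -
  have "1 / P - 1 = (1 - P) / P" using assms by (simp add: field_simps)
  then have "(cmod (1 / P - 1))^2 = (cmod (1 - P))^2 / (cmod P)^2"
    by (simp add: norm_divide power_divide)
  also have "(cmod (1 - P))^2 = (cmod P)^2 + (1 - 2 * Re P)"
    unfolding cmod_power2 by (simp add: power2_eq_square algebra_simps)
  finally show ?thesis using assms by (simp add: add_divide_distrib)
qed

lemma norm_inverse_minus_one_le_1_iff:
  fixes P :: complex
  assumes "P \<noteq> 0"
  shows "cmod (1 / P - 1) \<le> 1 \<longleftrightarrow> 1/2 \<le> Re P"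
proof -
  have "cmod (1 / P - 1) \<le> 1 \<longleftrightarrow> (cmod (1 / P - 1))^2 \<le> 1"
    by (simp add: abs_square_le_1)
  then show ?thesis using assms by (simp add: norm_inverse_minus_one_sq divide_le_0_iff mult.commute)
qed

lemma norm_inverse_minus_one_less_1_iff:
  fixes P :: complex
  assumes "P \<noteq> 0"
  shows "cmod (1 / P - 1) < 1 \<longleftrightarrow> 1/2 < Re P"
proof -
  have "cmod (1 / P - 1) < 1 \<longleftrightarrow> (cmod (1 / P - 1))^2 < 1"
    by (simp add: abs_square_less_1)
  then show ?thesis using assms by (simp add: norm_inverse_minus_one_sq divide_less_0_iff mult.commute)
qed

lemma norm_inverse_minus_one_eq_1_iff:
  fixes P :: complex
  assumes "P \<noteq> 0"
  shows "cmod (1 / P - 1) = 1 \<longleftrightarrow> Re P = 1/2"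
proof -
  have "cmod (1 / P - 1) = 1 \<longleftrightarrow> (cmod (1 / P - 1))^2 = 1"
    by (simp add: abs_square_eq_1)
  then show ?thesis using assms by (simp add: norm_inverse_minus_one_sq mult.commute)
qed

lemma subordinate_inverse_one_plus_if_Re_gt_half:
  fixes p :: "complex \<Rightarrow> complex"
  assumes hol: "p holomorphic_on ball 0 1" and p0: "p 0 = 1"
    and Re: "\<forall>z\<in>ball 0 1. 1/2 < Re (p z)"
  shows "p \<prec> (\<lambda>z. 1 / (1 + z))"
  unfolding subordinate_def
proof (intro exI conjI)
  have nz: "p z \<noteq> 0" if "z \<in> ball 0 1" for z using Re that by fastforce
  show "(\<lambda>z. 1 / p z - 1) holomorphic_on ball 0 1" using hol nz by (intro holomorphic_intros) auto
  show "(\<lambda>z. 1 / p z - 1) ` ball 0 1 \<subseteq> ball 0 1"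
    using Re nz norm_inverse_minus_one_less_1_iff by auto
  show "1 / p 0 - 1 = 0" using p0 by simp
  show "\<forall>z\<in>ball 0 1. p z = 1 / (1 + (1 / p z - 1))" using nz by simp
qed

lemma jack_lemma_Re_half:
  fixes p :: "complex \<Rightarrow> complex"
  assumes p: "p \<in> H1 n" "n \<ge> 1" and z0: "z0 \<in> ball 0 1" "z0 \<noteq> 0"
    and half: "Re (p z0) = 1/2" and ge: "\<forall>z\<in>cball 0 (cmod z0). 1/2 \<le> Re (p z)"
  obtains m where "real n \<le> m" "z0 * deriv p z0 = - of_real m * (1 / p z0 - 1) * (p z0)^2"
proof -
  have holp: "p holomorphic_on ball 0 1" using p(1) by (simp add: H1_def)
  obtain k where holk: "k holomorphic_on ball 0 1" and pk: "\<And>z. z \<in> ball 0 1 \<Longrightarrow> p z = 1 + z^n * k z"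
    using H1_eq_one_plus_power_mult[OF p] by blast
  define U where "U = ball 0 1 \<inter> (\<lambda>z. Re (p z)) -` {1/4<..}"
  have "open U" unfolding U_def
    using holomorphic_on_imp_continuous_on[OF holp]
    by (intro continuous_open_preimage continuous_intros) auto
  have UD: "U \<subseteq> ball 0 1" and nz: "\<And>z. z \<in> U \<Longrightarrow> p z \<noteq> 0" by (auto simp: U_def)
  have cbU: "cball 0 (cmod z0) \<subseteq> U" using ge z0(1) by (fastforce simp: U_def)
  define w where "w z = 1 / p z - 1" for z
  have holg: "(\<lambda>z. - k z / p z) holomorphic_on U"
    using holomorphic_on_subset[OF holk UD] holomorphic_on_subset[OF holp UD] nz
    by (intro holomorphic_intros) auto
  have wU: "w z = z^n * (- k z / p z)" if "z \<in> U" for z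
    using pk[of z] nz[OF that] that UD by (auto simp: w_def field_simps)
  have P0: "p z0 \<noteq> 0" using half by auto
  then have w1: "cmod (w z0) = 1"
    using norm_inverse_minus_one_eq_1_iff half by (simp add: w_def)
  have "cmod (w z) \<le> cmod (w z0)" if "z \<in> cball 0 (cmod z0)" for z
    using norm_inverse_minus_one_le_1_iff[of "p z"] nz[of z] cbU that ge w1
    by (auto simp: w_def)
  then have wmax: "\<forall>z\<in>cball 0 (cmod z0). cmod (w z) \<le> cmod (w z0)" by blast
  have r0: "0 < cmod z0" and w0: "w z0 \<noteq> 0" using z0(2) w1 by auto
  obtain m where m: "real n \<le> m" "z0 * deriv w z0 = of_real m * w z0"
    using jack_lemma[OF holg \<open>open U\<close> cbU r0 wU refl wmax w0] by blast
  have "(w has_field_derivative - deriv p z0 / (p z0)^2) (at z0)"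
    unfolding w_def using holomorphic_derivI[OF holp open_ball z0(1)] P0
    by (auto intro!: derivative_eq_intros simp: power2_eq_square divide_inverse)
  then have "z0 * (- deriv p z0 / (p z0)^2) = of_real m * (1 / p z0 - 1)"
    using m(2) by (simp add: DERIV_imp_deriv w_def)
  then show ?thesis using that m(1) P0 by (simp add: field_simps)
qed

lemma differential_equation_solved_for_Q:
  fixes P s D z0 Q0 :: complex and \<alpha> \<beta> m :: real
  assumes Ps: "P * (1 + s) = 1" and A: "of_real \<beta> + of_real \<alpha> * (1 + s) \<noteq> 0"
    and D: "z0 * D = - of_real m * s * P^2"
    and eq: "P * Q0 + z0 * D / (of_real \<beta> * P + of_real \<alpha>) = 1"
  shows "Q0 = 1 + s + of_real m * s / (of_real \<beta> + of_real \<alpha> * (1 + s))"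
proof -
  define A where "A = of_real \<beta> + of_real \<alpha> * (1 + s)"
  have P0: "P \<noteq> 0" and A0: "A \<noteq> 0" using Ps A by (auto simp: A_def)
  have "P * A = of_real \<beta> * P + of_real \<alpha> * (P * (1 + s))" by (simp add: A_def algebra_simps)
  then have PA: "of_real \<beta> * P + of_real \<alpha> = P * A" using Ps by simp
  have "z0 * D / (of_real \<beta> * P + of_real \<alpha>) = - of_real m * s * P / A"
    unfolding PA D using P0 by (simp add: power2_eq_square)
  then have PQ: "P * Q0 = 1 + of_real m * s * P / A" using eq by (simp add: algebra_simps)
  have "Q0 = (P * (1 + s)) * Q0" using Ps by simp
  also have "\<dots> = (1 + s) * (P * Q0)" by (simp add: algebra_simps)
  also have "\<dots> = 1 + s + of_real m * s * (P * (1 + s)) / A"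
    unfolding PQ by (simp add: algebra_simps)
  finally show ?thesis using Ps by (simp add: A_def)
qed

lemma Re_nonpos_if_mult_real_nonneg:
  fixes v X :: complex
  assumes v: "Re v < 0" and vX: "v * X = of_real t" and t: "0 \<le> t"
  shows "Re X \<le> 0"
proof (cases "X = 0")
  case False
  have "Re v * (cmod X)^2 = Re (v * X * cnj X)"
    by (simp add: mult.assoc complex_mult_cnj cmod_power2)
  also have "\<dots> = t * Re X" using vX by simp
  finally have "t * Re X < 0" using v False by (metis mult_neg_pos zero_less_power2 norm_eq_zero)
  then show ?thesis using t by (smt (verit) mult_nonneg_nonneg)
qed simp

(* Clearing denominators turns an equality into (\<zeta>/s - 1) X = m - c with Re X > 0,
   which is impossible because |\<zeta>/s| < 1. *)
lemma boundary_value_not_in_image: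
  fixes s \<zeta> :: complex and \<alpha> \<beta> c m :: real
  assumes s: "cmod s = 1" and \<zeta>: "cmod \<zeta> < 1"
    and \<beta>: "0 < \<beta>" and \<alpha>: "0 \<le> \<alpha>" and c: "0 \<le> c" "c \<le> m"
  shows "\<zeta> + of_real c * \<zeta> / (of_real \<beta> + of_real \<alpha> * (1 + \<zeta>))
           \<noteq> s + of_real m * s / (of_real \<beta> + of_real \<alpha> * (1 + s))"
proof
  define A where "A = of_real \<beta> + of_real \<alpha> * (1 + s)"
  define B where "B = of_real \<beta> + of_real \<alpha> * (1 + \<zeta>)"
  assume "\<zeta> + of_real c * \<zeta> / (of_real \<beta> + of_real \<alpha> * (1 + \<zeta>))
           = s + of_real m * s / (of_real \<beta> + of_real \<alpha> * (1 + s))"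
  then have eq: "\<zeta> + of_real c * \<zeta> / B = s + of_real m * s / A" by (simp add: A_def B_def)
  have "-1 \<le> Re s" using s abs_Re_le_cmod[of s] by simp
  then have ReA: "0 < Re A" using \<alpha> \<beta> by (simp add: A_def) (smt (verit) mult_nonneg_nonneg)
  have "-1 < Re \<zeta>" using \<zeta> abs_Re_le_cmod[of \<zeta>] by simp
  then have ReB: "0 < Re B" using \<alpha> \<beta> by (simp add: B_def) (smt (verit) mult_nonneg_nonneg)
  have s0: "s \<noteq> 0" and A0: "A \<noteq> 0" and B0: "B \<noteq> 0" using s ReA ReB by auto
  define X where "X = A + of_real (c * (\<beta> + \<alpha>)) / B"
  have "0 \<le> Re (of_real (c * (\<beta> + \<alpha>)) / B)"
    using ReB c \<alpha> \<beta> by (simp add: Re_divide)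
  then have ReX: "0 < Re X" using ReA by (simp add: X_def)
  have "s * B * ((\<zeta> / s - 1) * X) = (\<zeta> - s) * (A * B + of_real c * of_real (\<beta> + \<alpha>))"
    using s0 B0 by (simp add: X_def field_simps)
  also have "\<dots> = (\<zeta> * A * B + of_real c * \<zeta> * A) - s * A * B - of_real c * s * B"
    by (simp add: A_def B_def algebra_simps)
  also have "\<zeta> * A * B + of_real c * \<zeta> * A = s * A * B + of_real m * s * B"
    using eq A0 B0 by (simp add: field_simps)
  finally have "s * B * ((\<zeta> / s - 1) * X) = s * B * of_real (m - c)"
    by (simp add: algebra_simps)
  then have "(\<zeta> / s - 1) * X = of_real (m - c)" using s0 B0 by simp
  moreover have "Re (\<zeta> / s - 1) < 0"
    using \<zeta> s complex_Re_le_cmod[of "\<zeta> / s"] by (simp add: norm_divide)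
  ultimately show False using Re_nonpos_if_mult_real_nonneg ReX c by fastforce
qed

lemma Re_half_excluded_by_equation:
  fixes P D Q0 z0 \<zeta> :: complex and \<alpha> \<beta> c m :: real
  assumes P: "Re P = 1/2" and \<beta>: "0 < \<beta>" and \<alpha>: "0 \<le> \<alpha>" and c: "0 \<le> c" "c \<le> m"
    and \<zeta>: "cmod \<zeta> < 1"
    and D: "z0 * D = - of_real m * (1 / P - 1) * P^2"
    and eq: "P * Q0 + z0 * D / (of_real \<beta> * P + of_real \<alpha>) = 1"
    and Q0: "Q0 = 1 + \<zeta> + of_real c * \<zeta> / (of_real \<beta> + of_real \<alpha> * (1 + \<zeta>))"
  shows False
proof -
  define s where "s = 1 / P - 1"
  have P0: "P \<noteq> 0" using P by auto
  have s1: "cmod s = 1" using norm_inverse_minus_one_eq_1_iff[OF P0] P by (simp add: s_def)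
  have "-1 \<le> Re s" using s1 abs_Re_le_cmod[of s] by simp
  then have "0 < Re (of_real \<beta> + of_real \<alpha> * (1 + s))" using \<beta> \<alpha> by (simp add: add_pos_nonneg)
  then have A0: "of_real \<beta> + of_real \<alpha> * (1 + s) \<noteq> 0"
    by (metis less_irrefl zero_complex.sel(1))
  have Ps: "P * (1 + s) = 1" using P0 by (simp add: s_def)
  have "Q0 = 1 + s + of_real m * s / (of_real \<beta> + of_real \<alpha> * (1 + s))"
    using differential_equation_solved_for_Q[OF Ps A0 _ eq] D by (simp only: s_def)
  then have "\<zeta> + of_real c * \<zeta> / (of_real \<beta> + of_real \<alpha> * (1 + \<zeta>))
      = s + of_real m * s / (of_real \<beta> + of_real \<alpha> * (1 + s))"
    using Q0 by (simp add: add.assoc)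
  then show False using boundary_value_not_in_image[OF s1 \<zeta> \<beta> \<alpha> c] by blast
qed

theorem mainTheorem7:
  fixes n :: nat and \<alpha> \<beta> :: real and p Q :: "complex \<Rightarrow> complex"
  assumes "n \<ge> 1" and "\<alpha> \<ge> 0" and "\<beta> \<ge> 0" and "\<beta> \<noteq> 0"
    and "Q \<in> H1 n"
    and "Q \<prec> (\<lambda>z. 1 + z + of_nat n * z / (of_real \<beta> + of_real \<alpha> * (1 + z)))"
    and "p \<in> H1 n"
    and "\<forall>z\<in>ball 0 1. p z * Q z + z * deriv p z / (of_real \<beta> * p z + of_real \<alpha>) = 1"
  shows "p \<prec> (\<lambda>z. 1 / (1 + z))"
proof -
  have \<beta>: "0 < \<beta>" using assms(3,4) by simp
  have holp: "p holomorphic_on ball 0 1" and p0: "p 0 = 1" using assms(7) by (auto simp: H1_def)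
  obtain \<omega> where \<omega>: "\<omega> ` ball 0 1 \<subseteq> ball 0 1"
    and Q: "\<forall>z\<in>ball 0 1. Q z = 1 + \<omega> z + of_nat n * \<omega> z / (of_real \<beta> + of_real \<alpha> * (1 + \<omega> z))"
    using assms(6) unfolding subordinate_def by blast
  have "1/2 < Re (p z)" if z: "z \<in> ball 0 1" for z
  proof (rule ccontr)
    assume "\<not> 1/2 < Re (p z)"
    then have le: "Re (p z) \<le> 1/2" by simp
    have cont: "continuous_on (ball 0 1) (\<lambda>z. Re (p z))"
      using holomorphic_on_imp_continuous_on[OF holp] by (intro continuous_intros)
    have "1/2 < Re (p 0)" using p0 by simp
    then obtain z0 where z0: "z0 \<in> ball 0 1" "z0 \<noteq> 0" "Re (p z0) = 1/2"
      and ge: "\<forall>z\<in>cball 0 (cmod z0). 1/2 \<le> Re (p z)"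
      using least_modulus_level_point[OF cont _ z le] by blast
    obtain m where m: "real n \<le> m"
      and jack: "z0 * deriv p z0 = - of_real m * (1 / p z0 - 1) * (p z0)^2"
      using jack_lemma_Re_half[OF assms(7,1) z0 ge] .
    have "\<omega> z0 \<in> ball 0 1" using \<omega> z0(1) by blast
    then have \<zeta>: "cmod (\<omega> z0) < 1" by simp
    have Qz0: "Q z0 = 1 + \<omega> z0 + of_real (real n) * \<omega> z0 / (of_real \<beta> + of_real \<alpha> * (1 + \<omega> z0))"
      using Q z0(1) by simp
    have "p z0 * Q z0 + z0 * deriv p z0 / (of_real \<beta> * p z0 + of_real \<alpha>) = 1"
      using assms(8) z0(1) by blast
    from Re_half_excluded_by_equation[OF z0(3) \<beta> assms(2) of_nat_0_le_iff m \<zeta> jack this Qz0]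
    show False .
  qed
  then show ?thesis using subordinate_inverse_one_plus_if_Re_gt_half[OF holp p0] by blast
qed

end
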